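(* Let $\mathcal{G}$ be a noncompact metric graph in the class $\mathbf{G}$ with finitely many edges, at least one of which is bounded, and such that every vertex of $\mathcal{G}$ is attached to an even number of half-lines (possibly zero). Then for every $p>6$ there exists $\overline{\mu}>0$, depending on $p$ and $\mathcal{G}$, such that for all $\mu\ge\overline{\mu}$ problem \[ \begin{cases} u''+u^{p-1}=\lambda u & \text{on every edge of }\mathcal{G},\\ u\in H^1(\mathcal{G}),\ u>0 & \text{on }\mathcal{G},\\ \sum_{e\succ \mathrm{v}}\frac{du}{dx_e}(\mathrm{v})=0 & \text{for every vertex }\mathrm{v}, \end{cases} \] admits a positive solution $u\in H^1_\mu(\mathcal{G})$ (for some $\lambda\in\mathbb R$) with $E(u,\mathcal{G})<0$.
   Context: A metric graph $\mathcal{G}=(\mathbb{V},\mathbb{E})$ belongs to the class $\mathbf{G}$ if it is connected, has at most countably many edges, every vertex has finite degree, and $\inf_{e\in\mathbb{E}}|e|>0$. Noncompact means it has at least one half-line or infinitely many edges. $H^1(\mathcal{G})$ is the space of continuous functions on $\mathcal{G}$, $H^1$ on each edge, with finite $H^1$ norm; $H^1_\mu(\mathcal{G})=\{v\in H^1(\mathcal{G}):\|v\|_{L^2}^2=\mu\}$; $E(u,\mathcal{G})=\frac12\|u'\|_{L^2(\mathcal G)}^2-\frac1p\|u\|_{L^p(\mathcal G)}^p$. The vertex condition is the Kirchhoff condition: the sum over edges $e$ incident at $\mathrm v$ of the outgoing derivatives of $u$ at $\mathrm v$ vanishes. *)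

theory Defs
  imports "HOL-Analysis.Analysis"
begin

text \<open>Bounded edges e \<in> bedges are identified with [0, len e], the point 0
being glued to vertex src e and the point len e to vertex tgt e (self-loops and multiple
edges are allowed).  Half-lines h \<in> hedges are identified with [0, \<infinity>), the point 0
being glued to vertex att h.\<close>

record mgraph =
  verts  :: "nat set"
  bedges :: "nat set"
  hedges :: "nat set"
  len    :: "nat \<Rightarrow> real"
  src    :: "nat \<Rightarrow> nat"
  tgt    :: "nat \<Rightarrow> nat"
  att    :: "nat \<Rightarrow> nat"

definition adj :: "mgraph \<Rightarrow> (nat \<times> nat) set" where
  "adj G = {(src G e, tgt G e) | e. e \<in> bedges G} \<union> {(tgt G e, src G e) | e. e \<in> bedges G}"

text \<open>Class G with finitely many edges (finite degrees and inf of lengths > 0 are then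
automatic): connected, finitely many edges, positive lengths.\<close>
definition finite_graph_in_G :: "mgraph \<Rightarrow> bool" where
  "finite_graph_in_G G \<longleftrightarrow>
     verts G \<noteq> {} \<and> finite (verts G) \<and> finite (bedges G) \<and> finite (hedges G) \<and>
     (\<forall>e\<in>bedges G. 0 < len G e \<and> src G e \<in> verts G \<and> tgt G e \<in> verts G) \<and>
     (\<forall>h\<in>hedges G. att G h \<in> verts G) \<and>
     (\<forall>v\<in>verts G. \<forall>w\<in>verts G. (v, w) \<in> (adj G)\<^sup>*)"

text \<open>Noncompact (for finitely many edges): at least one half-line.\<close>
definition noncompact :: "mgraph \<Rightarrow> bool" where
  "noncompact G \<longleftrightarrow> hedges G \<noteq> {}"

text \<open>A function on the graph is a pair (ub, uh): ub e is its restriction to the bounded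
edge e (parametrised on [0, len e]), uh h its restriction to the half-line h.\<close>

text \<open>Continuity at the vertices (continuity inside edges is part of the edge requirements).\<close>
definition vertex_continuous :: "mgraph \<Rightarrow> (nat \<Rightarrow> real \<Rightarrow> real) \<Rightarrow> (nat \<Rightarrow> real \<Rightarrow> real) \<Rightarrow> bool" where
  "vertex_continuous G ub uh \<longleftrightarrow> (\<exists>\<phi> :: nat \<Rightarrow> real.
      (\<forall>e\<in>bedges G. ub e 0 = \<phi> (src G e) \<and> ub e (len G e) = \<phi> (tgt G e)) \<and>
      (\<forall>h\<in>hedges G. uh h 0 = \<phi> (att G h)))"

definition mass :: "mgraph \<Rightarrow> (nat \<Rightarrow> real \<Rightarrow> real) \<Rightarrow> (nat \<Rightarrow> real \<Rightarrow> real) \<Rightarrow> real" where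
  "mass G ub uh = (\<Sum>e\<in>bedges G. integral {0..len G e} (\<lambda>x. (ub e x)\<^sup>2))
                 + (\<Sum>h\<in>hedges G. integral {0..} (\<lambda>x. (uh h x)\<^sup>2))"

definition energy :: "real \<Rightarrow> mgraph \<Rightarrow> (nat \<Rightarrow> real \<Rightarrow> real) \<Rightarrow> (nat \<Rightarrow> real \<Rightarrow> real)
                       \<Rightarrow> (nat \<Rightarrow> real \<Rightarrow> real) \<Rightarrow> (nat \<Rightarrow> real \<Rightarrow> real) \<Rightarrow> real" where
  "energy p G ub uh dub duh =
     1/2 * ((\<Sum>e\<in>bedges G. integral {0..len G e} (\<lambda>x. (dub e x)\<^sup>2))
            + (\<Sum>h\<in>hedges G. integral {0..} (\<lambda>x. (duh h x)\<^sup>2)))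
   - 1/p * ((\<Sum>e\<in>bedges G. integral {0..len G e} (\<lambda>x. \<bar>ub e x\<bar> powr p))
            + (\<Sum>h\<in>hedges G. integral {0..} (\<lambda>x. \<bar>uh h x\<bar> powr p)))"

definition edge_solution :: "real \<Rightarrow> real \<Rightarrow> real set \<Rightarrow> (real \<Rightarrow> real) \<Rightarrow> (real \<Rightarrow> real) \<Rightarrow> bool" where
  "edge_solution p lam S f df \<longleftrightarrow> (\<exists>ddf. \<forall>x\<in>S.
      (f has_real_derivative df x) (at x within S) \<and>
      (df has_real_derivative ddf x) (at x within S) \<and>
      ddf x + (f x) powr (p - 1) = lam * f x)"

definition positive_kirchhoff_solution ::
  "real \<Rightarrow> real \<Rightarrow> mgraph \<Rightarrow> (nat \<Rightarrow> real \<Rightarrow> real) \<Rightarrow> (nat \<Rightarrow> real \<Rightarrow> real)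
     \<Rightarrow> (nat \<Rightarrow> real \<Rightarrow> real) \<Rightarrow> (nat \<Rightarrow> real \<Rightarrow> real) \<Rightarrow> bool" where
  "positive_kirchhoff_solution p lam G ub uh dub duh \<longleftrightarrow>
     (\<forall>e\<in>bedges G. edge_solution p lam {0..len G e} (ub e) (dub e)) \<and>
     (\<forall>h\<in>hedges G. edge_solution p lam {0..} (uh h) (duh h)) \<and>
     vertex_continuous G ub uh \<and>
     (\<forall>h\<in>hedges G. (\<lambda>x. (uh h x)\<^sup>2) integrable_on {0..} \<and> (\<lambda>x. (duh h x)\<^sup>2) integrable_on {0..}) \<and>
     (\<forall>e\<in>bedges G. \<forall>x\<in>{0..len G e}. 0 < ub e x) \<and>
     (\<forall>h\<in>hedges G. \<forall>x\<in>{0..}. 0 < uh h x) \<and>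
     (\<forall>v\<in>verts G.
        (\<Sum>e\<in>{e\<in>bedges G. src G e = v}. dub e 0)
      - (\<Sum>e\<in>{e\<in>bedges G. tgt G e = v}. dub e (len G e))
      + (\<Sum>h\<in>{h\<in>hedges G. att G h = v}. duh h 0) = 0)"

end

theory Submission
  imports Defs "HOL-Real_Asymp.Real_Asymp"
begin

(* On the bounded edges take u constant, u = t^beta with beta = 2/(p-2); on every half-line take
   the tail x |-> t^beta phi(t x +/- a) of the rescaled soliton, where
   phi(x) = (p/2)^(1/(p-2)) cosh(x/beta)^(-beta) solves phi'' + phi^(p-1) = phi and phi(+/-a) = 1.
   Then u is continuous, positive, and solves u'' + u^(p-1) = t^2 u on every edge.  At a vertex the
   derivatives along the bounded edges vanish and those along the half-lines are +/- t^(beta+1) phi'(a),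
   so the Kirchhoff condition holds as soon as half of the half-lines at each vertex carry the sign +
   and the other half the sign -, which is possible because their number is even.  If L is the total
   length of the bounded edges, the mass is L t^(2 beta) + O(t^(2 beta - 1)), continuous and unbounded
   in t, and the energy is -(L/p) t^(2 beta + 2) + O(t^(2 beta + 1)), negative for large t; by the
   intermediate value theorem every sufficiently large mass is attained.  The argument only needs
   p > 2, and it does not need a half-line to exist. *)

lemma absolutely_integrable_on_exp_bound:
  fixes g :: "real \<Rightarrow> real"
  assumes "continuous_on {c..} g" and bound: "\<And>x. c \<le> x \<Longrightarrow> \<bar>g x\<bar> \<le> M * exp (- x)"
  shows "g absolutely_integrable_on {c..}"
proof -
  have exp_integrable: "(\<lambda>x. M * exp (- x)) integrable_on {c..}"
    using integrable_on_cmult_left[OF integrable_on_exp_minus_to_infinity[of 1 c]] by simp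
  have "g \<in> borel_measurable (lebesgue_on {c..})"
    using assms(1) by (rule continuous_imp_measurable_on_sets_lebesgue) simp
  then have integrable: "g integrable_on {c..}"
    by (rule measurable_bounded_by_integrable_imp_integrable_real[OF _ exp_integrable])
       (auto simp: bound)
  show ?thesis
    by (rule absolutely_integrable_integrable_bound[OF _ integrable exp_integrable]) (auto simp: bound)
qed

lemma integral_halfline_affine:
  fixes f :: "real \<Rightarrow> real"
  assumes f: "f absolutely_integrable_on {s..}" and t: "0 < t"
  shows "(\<lambda>x. f (t * x + s)) integrable_on {0..}"
    and "integral {0..} (\<lambda>x. f (t * x + s)) = integral {s..} f / t"
proof -
  have image: "(\<lambda>x. t * x + s) ` {0..} = {s..}"
  proof (intro equalityI subsetI)
    fix y assume "y \<in> {s..}"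
    then have "y = t * ((y - s) / t) + s" "(y - s) / t \<in> {0..}"
      using t by auto
    then show "y \<in> (\<lambda>x. t * x + s) ` {0..}" by blast
  qed (use t in auto)
  have derivative: "((\<lambda>x. t * x + s) has_real_derivative t) (at x within {0..})" for x
    by (auto intro!: derivative_eq_intros)
  have "inj_on (\<lambda>x. t * x + s) {0..}"
    using t by (auto intro: inj_onI)
  from has_absolute_integral_change_of_variables_1'[OF _ derivative this, of f "integral {s..} f"]
  have "(\<lambda>x. \<bar>t\<bar> * f (t * x + s)) absolutely_integrable_on {0..} \<and>
        integral {0..} (\<lambda>x. \<bar>t\<bar> * f (t * x + s)) = integral {s..} f"
    using f unfolding image by simp
  then have scaled: "(\<lambda>x. t * f (t * x + s)) integrable_on {0..}"
    "integral {0..} (\<lambda>x. t * f (t * x + s)) = integral {s..} f"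
    using t by (auto dest: set_lebesgue_integral_eq_integral(1))
  show "(\<lambda>x. f (t * x + s)) integrable_on {0..}"
    using integrable_on_cmult_left[OF scaled(1), of "1 / t"] t by simp
  have "integral {0..} (\<lambda>x. t * f (t * x + s)) = t * integral {0..} (\<lambda>x. f (t * x + s))"
    by simp
  then show "integral {0..} (\<lambda>x. f (t * x + s)) = integral {s..} f / t"
    using scaled(2) t by (simp add: field_simps)
qed

lemma obtain_balanced_signs:
  fixes att :: "'a \<Rightarrow> 'b"
  assumes "finite H" and even_fibres: "\<forall>v\<in>V. even (card {h\<in>H. att h = v})"
  obtains \<sigma> :: "'a \<Rightarrow> real"
  where "\<forall>h\<in>H. \<sigma> h = 1 \<or> \<sigma> h = -1"
    and "\<forall>v\<in>V. (\<Sum>h\<in>{h\<in>H. att h = v}. \<sigma> h) = 0"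
proof -
  define F where "F v = {h\<in>H. att h = v}" for v
  have finite_F: "finite (F v)" for v
    using \<open>finite H\<close> by (simp add: F_def)
  have "\<exists>B. B \<subseteq> F v \<and> card B = card (F v) div 2" for v
    by (metis obtain_subset_with_card_n div_le_dividend)
  then obtain B where B: "\<And>v. B v \<subseteq> F v" "\<And>v. card (B v) = card (F v) div 2"
    by metis
  define \<sigma> where "\<sigma> h = (if h \<in> B (att h) then 1 else -1 :: real)" for h
  have "(\<Sum>h\<in>F v. \<sigma> h) = 0" if "v \<in> V" for v
  proof -
    have "even (card (F v))"
      using even_fibres that by (simp add: F_def)
    then have "card (F v - B v) = card (B v)"
      using B[of v] finite_F[of v] by (auto simp: card_Diff_subset finite_subset elim!: evenE)
    moreover have "\<sigma> h = 1" if "h \<in> B v" for h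
      using that B(1)[of v] by (auto simp: \<sigma>_def F_def)
    moreover have "\<sigma> h = -1" if "h \<in> F v - B v" for h
      using that by (auto simp: \<sigma>_def F_def)
    ultimately show ?thesis
      using sum.subset_diff[OF B(1) finite_F, of \<sigma> v] by simp
  qed
  then show ?thesis
    using that[of \<sigma>] by (auto simp: \<sigma>_def F_def)
qed

lemma continuous_on_filterlim_at_top_attains:
  fixes f :: "real \<Rightarrow> real"
  assumes "continuous_on {a..} f" and "filterlim f at_top at_top" and "f a \<le> y"
  shows "\<exists>t\<ge>a. f t = y"
proof -
  obtain T where T: "\<And>t. T \<le> t \<Longrightarrow> y \<le> f t"
    using assms(2) by (auto simp: filterlim_at_top eventually_at_top_linorder)
  have "y \<le> f (max a T)" and "continuous_on {a..max a T} f"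
    using T assms(1) by (auto intro: continuous_on_subset)
  then show ?thesis
    using IVT'[of f a y "max a T"] assms(3) by auto
qed

lemma exp_abs_le_cosh: "exp \<bar>x\<bar> / 2 \<le> cosh (x :: real)"
proof -
  have "exp \<bar>x\<bar> \<le> exp x + exp (- x)"
    using exp_gt_zero[of x] exp_gt_zero[of "- x"] by (cases "0 \<le> x") auto
  then show ?thesis
    by (simp add: cosh_field_def)
qed

section \<open>The soliton of the NLS on the line\<close>

context
  fixes p :: real
  assumes p_gt_2: "2 < p"
begin

definition soliton_exponent :: real where
  "soliton_exponent = 2 / (p - 2)"

definition soliton_amplitude :: real where
  "soliton_amplitude = (p / 2) powr (1 / (p - 2))"

definition soliton :: "real \<Rightarrow> real" where
  "soliton x = soliton_amplitude * cosh (x / soliton_exponent) powr (- soliton_exponent)"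

definition soliton_deriv :: "real \<Rightarrow> real" where
  "soliton_deriv x = - soliton_amplitude * sinh (x / soliton_exponent)
                       * cosh (x / soliton_exponent) powr (- soliton_exponent - 1)"

lemma soliton_exponent_pos: "0 < soliton_exponent"
  using p_gt_2 by (simp add: soliton_exponent_def)

lemma soliton_exponent_mult: "soliton_exponent * (p - 2) = 2"
  using p_gt_2 by (simp add: soliton_exponent_def field_simps)

lemma soliton_amplitude_pos: "0 < soliton_amplitude"
  using p_gt_2 by (simp add: soliton_amplitude_def)

lemma soliton_amplitude_powr: "soliton_amplitude powr (p - 2) = p / 2"
  using p_gt_2 by (simp add: soliton_amplitude_def powr_powr)

lemma soliton_pos: "0 < soliton x"
  by (simp add: soliton_def soliton_amplitude_pos cosh_real_pos)

lemma soliton_minus [simp]: "soliton (- x) = soliton x"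
  by (simp add: soliton_def)

lemma soliton_deriv_minus [simp]: "soliton_deriv (- x) = - soliton_deriv x"
  by (simp add: soliton_deriv_def)

lemma has_real_derivative_soliton: "(soliton has_real_derivative soliton_deriv x) (at x)"
proof -
  let ?b = soliton_exponent and ?A = soliton_amplitude
  have "((\<lambda>x. ?A * cosh (x / ?b) powr (- ?b)) has_real_derivative
         ?A * (- ?b * cosh (x / ?b) powr (- ?b - 1) * (sinh (x / ?b) * (1 / ?b)))) (at x)"
    by (auto intro!: derivative_eq_intros simp: cosh_real_pos)
  also have "?A * (- ?b * cosh (x / ?b) powr (- ?b - 1) * (sinh (x / ?b) * (1 / ?b))) = soliton_deriv x"
    using soliton_exponent_pos by (simp add: soliton_deriv_def)
  finally show ?thesis
    unfolding soliton_def[abs_def] .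
qed

lemma soliton_powr: "soliton x powr (p - 1) = p / 2 * soliton x / (cosh (x / soliton_exponent))\<^sup>2"
proof -
  let ?b = soliton_exponent and ?A = soliton_amplitude and ?C = "cosh (x / soliton_exponent)"
  have C: "0 < ?C" by (rule cosh_real_pos)
  have "soliton x powr (p - 1) = ?A powr (p - 1) * ?C powr (- ?b * (p - 1))"
    using soliton_amplitude_pos by (simp add: soliton_def powr_mult powr_powr)
  also have "?A powr (p - 1) = ?A powr (1 + (p - 2))"
    by simp
  also have "\<dots> = ?A powr 1 * ?A powr (p - 2)"
    by (rule powr_add)
  also have "\<dots> = ?A * (p / 2)"
    using soliton_amplitude_powr soliton_amplitude_pos by simp
  also have "?C powr (- ?b * (p - 1)) = ?C powr (- ?b) / ?C\<^sup>2"
    using soliton_exponent_mult C by (simp add: algebra_simps powr_diff powr_minus_divide)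
  finally show ?thesis
    by (simp add: soliton_def)
qed

lemma has_real_derivative_soliton_deriv:
  "(soliton_deriv has_real_derivative soliton x - soliton x powr (p - 1)) (at x)"
proof -
  let ?b = soliton_exponent and ?A = soliton_amplitude
  let ?C = "cosh (x / ?b)" and ?S = "sinh (x / ?b)" and ?K = "cosh (x / ?b) powr (- ?b)"
  have C: "0 < ?C" by (rule cosh_real_pos)
  have b: "0 < ?b" by (rule soliton_exponent_pos)
  have "(soliton_deriv has_real_derivative
          - ?A / ?b * ?C * ?C powr (- ?b - 1) + ?A * (?b + 1) / ?b * ?S\<^sup>2 * ?C powr (- ?b - 2)) (at x)"
    unfolding soliton_deriv_def[abs_def] using b
    by (auto intro!: derivative_eq_intros simp: cosh_real_pos power2_eq_square field_simps)
  also have "- ?A / ?b * ?C * ?C powr (- ?b - 1) + ?A * (?b + 1) / ?b * ?S\<^sup>2 * ?C powr (- ?b - 2)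
           = ?A * ?K * ((?b + 1) / ?b - 1 / ?b) - ?A * ((?b + 1) / ?b) * ?K / ?C\<^sup>2"
  proof -
    have powr_1: "?C powr (- ?b - 1) = ?K / ?C" and powr_2: "?C powr (- ?b - 2) = ?K / ?C\<^sup>2"
      using C by (simp_all add: powr_diff powr_numeral)
    have sinh_square: "?S\<^sup>2 = ?C\<^sup>2 - 1"
      by (simp add: cosh_square_eq)
    show ?thesis
      unfolding powr_1 powr_2 sinh_square using C b by (simp add: field_simps)
  qed
  also have "(?b + 1) / ?b - 1 / ?b = 1"
    using b by (simp add: field_simps)
  also have "(?b + 1) / ?b = p / 2"
    using soliton_exponent_mult b by (simp add: field_simps)
  also have "?A * ?K * 1 - ?A * (p / 2) * ?K / ?C\<^sup>2 = soliton x - soliton x powr (p - 1)"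
    unfolding soliton_powr by (simp add: soliton_def)
  finally show ?thesis .
qed

lemma soliton_le_amplitude: "soliton x \<le> soliton_amplitude"
proof -
  have "cosh (x / soliton_exponent) powr (- soliton_exponent) \<le> 1 powr (- soliton_exponent)"
    using soliton_exponent_pos by (intro powr_mono2') (auto simp: cosh_real_ge_1)
  then show ?thesis
    using soliton_amplitude_pos by (simp add: soliton_def mult_left_le)
qed

lemma abs_soliton_deriv_le: "\<bar>soliton_deriv x\<bar> \<le> soliton x"
proof -
  let ?b = soliton_exponent and ?A = soliton_amplitude
  let ?C = "cosh (x / ?b)" and ?S = "sinh (x / ?b)"
  have C: "0 < ?C" by (rule cosh_real_pos)
  have "\<bar>?S\<bar> \<le> ?C"
    using sinh_le_cosh_real[of "x / ?b"] sinh_le_cosh_real[of "- (x / ?b)"] by (simp add: abs_if)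
  have "\<bar>soliton_deriv x\<bar> = ?A * \<bar>?S\<bar> * ?C powr (- ?b - 1)"
    using soliton_amplitude_pos by (simp add: soliton_deriv_def abs_mult)
  also have "\<dots> \<le> ?A * ?C * ?C powr (- ?b - 1)"
    using \<open>\<bar>?S\<bar> \<le> ?C\<close> soliton_amplitude_pos by (intro mult_right_mono mult_left_mono) auto
  also have "\<dots> = soliton x"
    using C by (simp add: soliton_def powr_diff)
  finally show ?thesis .
qed

lemma soliton_le_exp: "soliton x \<le> soliton_amplitude * 2 powr soliton_exponent * exp (- \<bar>x\<bar>)"
proof -
  let ?b = soliton_exponent
  have b: "0 < ?b" by (rule soliton_exponent_pos)
  have "cosh (x / ?b) powr (- ?b) \<le> (exp \<bar>x / ?b\<bar> / 2) powr (- ?b)"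
    using b exp_abs_le_cosh[of "x / ?b"] by (intro powr_mono2') auto
  also have "\<dots> = exp \<bar>x / ?b\<bar> powr (- ?b) / 2 powr (- ?b)"
    by (simp add: powr_divide)
  also have "exp \<bar>x / ?b\<bar> powr (- ?b) = exp (- \<bar>x\<bar>)"
    using b by (simp add: exp_powr_real)
  also have "exp (- \<bar>x\<bar>) / 2 powr (- ?b) = 2 powr ?b * exp (- \<bar>x\<bar>)"
    by (simp add: powr_minus_divide)
  finally show ?thesis
    using soliton_amplitude_pos by (simp add: soliton_def mult.assoc)
qed

lemma soliton_powr_le_exp:
  assumes "1 \<le> q"
  shows "soliton x powr q \<le> soliton_amplitude powr q * 2 powr soliton_exponent * exp (- x)"
proof -
  have "soliton x powr q = soliton x powr (q - 1) * soliton x"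
    using soliton_pos[of x] by (simp add: powr_diff)
  also have "\<dots> \<le> soliton_amplitude powr (q - 1)
                     * (soliton_amplitude * 2 powr soliton_exponent * exp (- \<bar>x\<bar>))"
    using assms soliton_pos soliton_le_amplitude soliton_le_exp
    by (intro mult_mono powr_mono2) (auto simp: less_imp_le)
  also have "\<dots> \<le> soliton_amplitude powr (q - 1) * (soliton_amplitude * 2 powr soliton_exponent * exp (- x))"
    using soliton_amplitude_pos by (intro mult_left_mono) auto
  also have "\<dots> = soliton_amplitude powr q * 2 powr soliton_exponent * exp (- x)"
    using soliton_amplitude_pos by (simp add: powr_diff)
  finally show ?thesis .
qed

lemma continuous_on_soliton: "continuous_on S soliton"
  using DERIV_isCont[OF has_real_derivative_soliton] by (intro continuous_at_imp_continuous_on) auto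

lemma continuous_on_soliton_deriv: "continuous_on S soliton_deriv"
  using DERIV_isCont[OF has_real_derivative_soliton_deriv] by (intro continuous_at_imp_continuous_on) auto

lemma soliton_square_integrable: "(\<lambda>x. (soliton x)\<^sup>2) absolutely_integrable_on {c..}"
proof (rule absolutely_integrable_on_exp_bound)
  show "continuous_on {c..} (\<lambda>x. (soliton x)\<^sup>2)"
    by (intro continuous_intros continuous_on_soliton)
  show "\<bar>(soliton x)\<^sup>2\<bar> \<le> soliton_amplitude powr 2 * 2 powr soliton_exponent * exp (- x)" for x
    using soliton_powr_le_exp[of 2 x] soliton_pos[of x] by (simp add: powr_numeral)
qed

lemma soliton_deriv_square_integrable: "(\<lambda>x. (soliton_deriv x)\<^sup>2) absolutely_integrable_on {c..}"
proof (rule absolutely_integrable_on_exp_bound)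
  show "continuous_on {c..} (\<lambda>x. (soliton_deriv x)\<^sup>2)"
    by (intro continuous_intros continuous_on_soliton_deriv)
  show "\<bar>(soliton_deriv x)\<^sup>2\<bar> \<le> soliton_amplitude powr 2 * 2 powr soliton_exponent * exp (- x)" for x
  proof -
    have "\<bar>(soliton_deriv x)\<^sup>2\<bar> \<le> (soliton x)\<^sup>2"
      using abs_soliton_deriv_le[of x] soliton_pos[of x] abs_le_square_iff[of "soliton_deriv x" "soliton x"]
      by simp
    also have "\<dots> \<le> soliton_amplitude powr 2 * 2 powr soliton_exponent * exp (- x)"
      using soliton_powr_le_exp[of 2 x] soliton_pos[of x] by (simp add: powr_numeral)
    finally show ?thesis .
  qed
qed

lemma soliton_powr_integrable: "(\<lambda>x. soliton x powr p) absolutely_integrable_on {c..}"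
proof (rule absolutely_integrable_on_exp_bound)
  show "continuous_on {c..} (\<lambda>x. soliton x powr p)"
    using soliton_pos[THEN less_imp_neq] by (intro continuous_intros continuous_on_soliton) auto
  show "\<bar>soliton x powr p\<bar> \<le> soliton_amplitude powr p * 2 powr soliton_exponent * exp (- x)" for x
    using soliton_powr_le_exp[of p x] p_gt_2 by simp
qed

definition soliton_unit_point :: real where
  "soliton_unit_point = soliton_exponent * arcosh (sqrt (p / 2))"

lemma soliton_at_unit_point: "soliton soliton_unit_point = 1"
proof -
  have "cosh (soliton_unit_point / soliton_exponent) = sqrt (p / 2)"
    using p_gt_2 soliton_exponent_pos by (simp add: soliton_unit_point_def)
  moreover have "sqrt (p / 2) powr (- soliton_exponent) = (p / 2) powr (- (1 / (p - 2)))"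
    using p_gt_2 by (simp add: powr_half_sqrt[symmetric] powr_powr soliton_exponent_def)
  ultimately show ?thesis
    using p_gt_2 by (simp add: soliton_def soliton_amplitude_def powr_minus)
qed

lemma powr_soliton_exponent_scaling:
  assumes "0 < t" and "0 \<le> y"
  shows "(t powr soliton_exponent * y) powr (p - 1) = t\<^sup>2 * t powr soliton_exponent * y powr (p - 1)"
proof -
  have "soliton_exponent * (p - 1) = soliton_exponent + 2"
    using soliton_exponent_mult by (simp add: algebra_simps)
  then have "(t powr soliton_exponent) powr (p - 1) = t\<^sup>2 * t powr soliton_exponent"
    using assms by (simp add: powr_powr powr_add powr_numeral)
  then show ?thesis
    using assms by (simp add: powr_mult)
qed

lemma edge_solution_constant:
  assumes "0 < t"
  shows "edge_solution p (t\<^sup>2) S (\<lambda>x. t powr soliton_exponent) (\<lambda>x. 0)"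
  unfolding edge_solution_def
proof (intro exI[of _ "\<lambda>x. 0"] ballI conjI)
  fix x
  show "((\<lambda>x. t powr soliton_exponent) has_real_derivative 0) (at x within S)"
    and "((\<lambda>x. 0) has_real_derivative 0) (at x within S)"
    by (rule DERIV_const)+
  show "0 + (t powr soliton_exponent) powr (p - 1) = t\<^sup>2 * t powr soliton_exponent"
    using powr_soliton_exponent_scaling[OF assms, of 1] by simp
qed

lemma edge_solution_scaled_soliton:
  assumes t: "0 < t"
  shows "edge_solution p (t\<^sup>2) S (\<lambda>x. t powr soliton_exponent * soliton (t * x + s))
           (\<lambda>x. t powr (soliton_exponent + 1) * soliton_deriv (t * x + s))"
  unfolding edge_solution_def
proof (intro exI[of _ "\<lambda>x. t powr (soliton_exponent + 2)
                              * (soliton (t * x + s) - soliton (t * x + s) powr (p - 1))"] ballI conjI)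
  fix x
  let ?b = soliton_exponent and ?y = "t * x + s"
  have inner: "((\<lambda>x. t * x + s) has_real_derivative t) (at x)"
    by (auto intro!: derivative_eq_intros)
  have "((\<lambda>x. t powr ?b * soliton (t * x + s)) has_real_derivative t powr ?b * (soliton_deriv ?y * t)) (at x)"
    by (intro DERIV_cmult DERIV_chain2[OF has_real_derivative_soliton inner])
  moreover have "t powr ?b * (soliton_deriv ?y * t) = t powr (?b + 1) * soliton_deriv ?y"
    using t by (simp add: powr_add)
  ultimately show "((\<lambda>x. t powr ?b * soliton (t * x + s)) has_real_derivative
                      t powr (?b + 1) * soliton_deriv ?y) (at x within S)"
    by (simp add: has_field_derivative_at_within)
  have "((\<lambda>x. t powr (?b + 1) * soliton_deriv (t * x + s)) has_real_derivative
         t powr (?b + 1) * ((soliton ?y - soliton ?y powr (p - 1)) * t)) (at x)"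
    by (intro DERIV_cmult DERIV_chain2[OF has_real_derivative_soliton_deriv inner])
  moreover have "t powr (?b + 1) * ((soliton ?y - soliton ?y powr (p - 1)) * t)
      = t powr (?b + 2) * (soliton ?y - soliton ?y powr (p - 1))"
    using t by (simp add: powr_add power2_eq_square)
  ultimately show "((\<lambda>x. t powr (?b + 1) * soliton_deriv (t * x + s)) has_real_derivative
         t powr (?b + 2) * (soliton ?y - soliton ?y powr (p - 1))) (at x within S)"
    by (simp add: has_field_derivative_at_within)
  have "t powr (?b + 2) = t\<^sup>2 * t powr ?b"
    using t by (simp add: powr_add powr_numeral)
  then show "t powr (?b + 2) * (soliton ?y - soliton ?y powr (p - 1)) + (t powr ?b * soliton ?y) powr (p - 1)
      = t\<^sup>2 * (t powr ?b * soliton ?y)"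
    using powr_soliton_exponent_scaling[OF t, of "soliton ?y"] soliton_pos[of ?y]
    by (simp add: algebra_simps)
qed

section \<open>Soliton tails glued to a constant core\<close>

definition plateau :: "real \<Rightarrow> nat \<Rightarrow> real \<Rightarrow> real" where
  "plateau t e x = t powr soliton_exponent"

definition soliton_tail :: "real \<Rightarrow> (nat \<Rightarrow> real) \<Rightarrow> nat \<Rightarrow> real \<Rightarrow> real" where
  "soliton_tail t \<sigma> h x = t powr soliton_exponent * soliton (t * x + \<sigma> h * soliton_unit_point)"

definition soliton_tail_deriv :: "real \<Rightarrow> (nat \<Rightarrow> real) \<Rightarrow> nat \<Rightarrow> real \<Rightarrow> real" where
  "soliton_tail_deriv t \<sigma> h x =
     t powr (soliton_exponent + 1) * soliton_deriv (t * x + \<sigma> h * soliton_unit_point)"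

lemma positive_kirchhoff_solution_soliton_tail:
  assumes t: "0 < t" and sign: "\<forall>h\<in>hedges G. \<sigma> h = 1 \<or> \<sigma> h = -1"
    and balanced: "\<forall>v\<in>verts G. (\<Sum>h\<in>{h\<in>hedges G. att G h = v}. \<sigma> h) = 0"
  shows "positive_kirchhoff_solution p (t\<^sup>2) G
           (plateau t) (soliton_tail t \<sigma>) (\<lambda>e x. 0) (soliton_tail_deriv t \<sigma>)"
  unfolding positive_kirchhoff_solution_def
proof (intro conjI ballI)
  fix e assume "e \<in> bedges G"
  show "edge_solution p (t\<^sup>2) {0..len G e} (plateau t e) (\<lambda>x. 0)"
    using edge_solution_constant[OF t] by (simp add: plateau_def[abs_def])
next
  fix h assume "h \<in> hedges G"
  show "edge_solution p (t\<^sup>2) {0..} (soliton_tail t \<sigma> h) (soliton_tail_deriv t \<sigma> h)"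
    using edge_solution_scaled_soliton[OF t]
    by (simp add: soliton_tail_def[abs_def] soliton_tail_deriv_def[abs_def])
next
  have "soliton_tail t \<sigma> h 0 = t powr soliton_exponent" if "h \<in> hedges G" for h
    using sign that soliton_at_unit_point by (auto simp: soliton_tail_def)
  then show "vertex_continuous G (plateau t) (soliton_tail t \<sigma>)"
    unfolding vertex_continuous_def by (intro exI[of _ "\<lambda>v. t powr soliton_exponent"]) (simp add: plateau_def)
next
  fix h
  let ?s = "\<sigma> h * soliton_unit_point"
  have "(\<lambda>x. (t powr soliton_exponent)\<^sup>2 * (soliton (t * x + ?s))\<^sup>2) integrable_on {0..}"
    using integrable_on_cmult_left[OF integral_halfline_affine(1)[OF soliton_square_integrable[of ?s] t]]
    by simp
  then show "(\<lambda>x. (soliton_tail t \<sigma> h x)\<^sup>2) integrable_on {0..}"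
    by (simp add: soliton_tail_def power_mult_distrib)
  have "(\<lambda>x. (t powr (soliton_exponent + 1))\<^sup>2 * (soliton_deriv (t * x + ?s))\<^sup>2) integrable_on {0..}"
    using integrable_on_cmult_left[OF integral_halfline_affine(1)[OF soliton_deriv_square_integrable[of ?s] t]]
    by simp
  then show "(\<lambda>x. (soliton_tail_deriv t \<sigma> h x)\<^sup>2) integrable_on {0..}"
    by (simp add: soliton_tail_deriv_def power_mult_distrib)
next
  fix e x
  show "0 < plateau t e x"
    using t by (simp add: plateau_def)
next
  fix h and x :: real
  show "0 < soliton_tail t \<sigma> h x"
    using t soliton_pos by (simp add: soliton_tail_def)
next
  fix v assume "v \<in> verts G"
  let ?c = "t powr (soliton_exponent + 1) * soliton_deriv soliton_unit_point"
  have "soliton_tail_deriv t \<sigma> h 0 = ?c * \<sigma> h" if "h \<in> hedges G" for h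
    using sign that by (auto simp: soliton_tail_deriv_def)
  then have "(\<Sum>h\<in>{h\<in>hedges G. att G h = v}. soliton_tail_deriv t \<sigma> h 0)
      = ?c * (\<Sum>h\<in>{h\<in>hedges G. att G h = v}. \<sigma> h)"
    by (simp add: sum_distrib_left)
  then show "(\<Sum>e\<in>{e\<in>bedges G. src G e = v}. 0) - (\<Sum>e\<in>{e\<in>bedges G. tgt G e = v}. 0)
      + (\<Sum>h\<in>{h\<in>hedges G. att G h = v}. soliton_tail_deriv t \<sigma> h 0) = 0"
    using balanced \<open>v \<in> verts G\<close> by simp
qed

lemma mass_soliton_tail:
  assumes len: "\<forall>e\<in>bedges G. 0 < len G e" and t: "0 < t"
  shows "mass G (plateau t) (soliton_tail t \<sigma>)
       = (\<Sum>e\<in>bedges G. len G e) * t powr (2 * soliton_exponent)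
         + t powr (2 * soliton_exponent - 1)
           * (\<Sum>h\<in>hedges G. integral {\<sigma> h * soliton_unit_point..} (\<lambda>x. (soliton x)\<^sup>2))"
proof -
  let ?b = soliton_exponent
  have square: "(t powr ?b)\<^sup>2 = t powr (2 * ?b)"
    using t by (simp add: powr_power)
  have plateau: "integral {0..len G e} (\<lambda>x. (plateau t e x)\<^sup>2) = len G e * t powr (2 * ?b)"
    if "e \<in> bedges G" for e
    using len that by (simp add: plateau_def square less_imp_le)
  have tail: "integral {0..} (\<lambda>x. (soliton_tail t \<sigma> h x)\<^sup>2)
      = t powr (2 * ?b - 1) * integral {\<sigma> h * soliton_unit_point..} (\<lambda>x. (soliton x)\<^sup>2)" for h
  proof -
    have "(\<lambda>x. (soliton_tail t \<sigma> h x)\<^sup>2)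
        = (\<lambda>x. t powr (2 * ?b) * (soliton (t * x + \<sigma> h * soliton_unit_point))\<^sup>2)"
      by (simp add: soliton_tail_def power_mult_distrib square)
    then show ?thesis
      using integral_halfline_affine(2)[OF soliton_square_integrable t] t by (simp add: powr_diff)
  qed
  show ?thesis
    unfolding mass_def by (simp add: plateau tail sum_distrib_left sum_distrib_right)
qed

lemma energy_soliton_tail:
  assumes len: "\<forall>e\<in>bedges G. 0 < len G e" and t: "0 < t"
  shows "energy p G (plateau t) (soliton_tail t \<sigma>) (\<lambda>e x. 0) (soliton_tail_deriv t \<sigma>)
       = t powr (2 * soliton_exponent + 1)
           * ((\<Sum>h\<in>hedges G. integral {\<sigma> h * soliton_unit_point..} (\<lambda>x. (soliton_deriv x)\<^sup>2)) / 2
              - (\<Sum>h\<in>hedges G. integral {\<sigma> h * soliton_unit_point..} (\<lambda>x. soliton x powr p)) / p)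
         - (\<Sum>e\<in>bedges G. len G e) * t powr (2 * soliton_exponent + 2) / p"
proof -
  let ?b = soliton_exponent
  have "?b * p = 2 * ?b + 2"
    using soliton_exponent_mult by (simp add: algebra_simps)
  then have amplitude_powr: "(t powr ?b) powr p = t powr (2 * ?b + 2)"
    by (simp add: powr_powr)
  have deriv_square: "(t powr (?b + 1))\<^sup>2 = t powr (2 * ?b + 2)"
    using t by (simp add: powr_power algebra_simps)
  have shrink: "t powr (2 * ?b + 2) * y / t = t powr (2 * ?b + 1) * y" for y
    using t by (simp add: powr_add power2_eq_square)
  have plateau: "integral {0..len G e} (\<lambda>x. \<bar>plateau t e x\<bar> powr p) = len G e * t powr (2 * ?b + 2)"
    if "e \<in> bedges G" for e
    using len that amplitude_powr by (simp add: plateau_def less_imp_le)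
  have tail: "integral {0..} (\<lambda>x. \<bar>soliton_tail t \<sigma> h x\<bar> powr p)
      = t powr (2 * ?b + 1) * integral {\<sigma> h * soliton_unit_point..} (\<lambda>x. soliton x powr p)" for h
  proof -
    have "(\<lambda>x. \<bar>soliton_tail t \<sigma> h x\<bar> powr p)
        = (\<lambda>x. t powr (2 * ?b + 2) * soliton (t * x + \<sigma> h * soliton_unit_point) powr p)"
      using soliton_pos by (simp add: soliton_tail_def powr_mult amplitude_powr less_imp_le)
    then show ?thesis
      using integral_halfline_affine(2)[OF soliton_powr_integrable t] shrink by simp
  qed
  have tail_deriv: "integral {0..} (\<lambda>x. (soliton_tail_deriv t \<sigma> h x)\<^sup>2)
      = t powr (2 * ?b + 1) * integral {\<sigma> h * soliton_unit_point..} (\<lambda>x. (soliton_deriv x)\<^sup>2)" for h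
  proof -
    have "(\<lambda>x. (soliton_tail_deriv t \<sigma> h x)\<^sup>2)
        = (\<lambda>x. t powr (2 * ?b + 2) * (soliton_deriv (t * x + \<sigma> h * soliton_unit_point))\<^sup>2)"
      by (simp add: soliton_tail_deriv_def power_mult_distrib deriv_square)
    then show ?thesis
      using integral_halfline_affine(2)[OF soliton_deriv_square_integrable t] shrink by simp
  qed
  show ?thesis
    unfolding energy_def
    by (simp add: plateau tail tail_deriv sum_distrib_left[symmetric] sum_distrib_right[symmetric]
        sum_divide_distrib[symmetric] algebra_simps)
qed

lemma continuous_on_mass_soliton_tail:
  assumes "\<forall>e\<in>bedges G. 0 < len G e"
  shows "continuous_on {0<..} (\<lambda>t. mass G (plateau t) (soliton_tail t \<sigma>))"
proof -
  have "continuous_on {0<..} (\<lambda>t. (\<Sum>e\<in>bedges G. len G e) * t powr (2 * soliton_exponent)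
         + t powr (2 * soliton_exponent - 1)
           * (\<Sum>h\<in>hedges G. integral {\<sigma> h * soliton_unit_point..} (\<lambda>x. (soliton x)\<^sup>2)))"
    by (intro continuous_intros) auto
  then show ?thesis
    by (rule continuous_on_cong[THEN iffD1, rotated 2]) (simp_all add: mass_soliton_tail assms)
qed

lemma filterlim_mass_soliton_tail:
  assumes G: "finite_graph_in_G G" and "bedges G \<noteq> {}"
  shows "filterlim (\<lambda>t. mass G (plateau t) (soliton_tail t \<sigma>)) at_top at_top"
proof -
  let ?b = soliton_exponent and ?L = "\<Sum>e\<in>bedges G. len G e"
  let ?I = "\<Sum>h\<in>hedges G. integral {\<sigma> h * soliton_unit_point..} (\<lambda>x. (soliton x)\<^sup>2)"
  have len: "\<forall>e\<in>bedges G. 0 < len G e" and "finite (bedges G)"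
    using G by (auto simp: finite_graph_in_G_def)
  then have "0 < ?L"
    using \<open>bedges G \<noteq> {}\<close> by (intro sum_pos) auto
  have "0 \<le> ?I"
    by (intro sum_nonneg integral_nonneg set_lebesgue_integral_eq_integral(1) soliton_square_integrable) auto
  have "filterlim (\<lambda>t. ?L * t powr (2 * ?b)) at_top at_top"
    using \<open>0 < ?L\<close> soliton_exponent_pos
    by (intro filterlim_tendsto_pos_mult_at_top[OF tendsto_const] real_powr_at_top) auto
  moreover have "\<forall>\<^sub>F t in at_top. ?L * t powr (2 * ?b) \<le> mass G (plateau t) (soliton_tail t \<sigma>)"
    using eventually_gt_at_top[of 0]
  proof eventually_elim
    case (elim t)
    then show ?case
      using \<open>0 \<le> ?I\<close> by (simp add: mass_soliton_tail[OF len])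
  qed
  ultimately show ?thesis
    by (rule filterlim_at_top_mono)
qed

lemma eventually_energy_soliton_tail_neg:
  assumes G: "finite_graph_in_G G" and "bedges G \<noteq> {}"
  shows "\<forall>\<^sub>F t in at_top.
           energy p G (plateau t) (soliton_tail t \<sigma>) (\<lambda>e x. 0) (soliton_tail_deriv t \<sigma>) < 0"
proof -
  let ?b = soliton_exponent and ?L = "\<Sum>e\<in>bedges G. len G e"
  let ?K = "(\<Sum>h\<in>hedges G. integral {\<sigma> h * soliton_unit_point..} (\<lambda>x. (soliton_deriv x)\<^sup>2)) / 2
            - (\<Sum>h\<in>hedges G. integral {\<sigma> h * soliton_unit_point..} (\<lambda>x. soliton x powr p)) / p"
  have len: "\<forall>e\<in>bedges G. 0 < len G e" and "finite (bedges G)"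
    using G by (auto simp: finite_graph_in_G_def)
  then have L: "0 < ?L"
    using \<open>bedges G \<noteq> {}\<close> by (intro sum_pos) auto
  show ?thesis
    using eventually_gt_at_top[of "max 0 (p * ?K / ?L)"]
  proof eventually_elim
    case (elim t)
    then have t: "0 < t" and "p * ?K / ?L < t"
      by auto
    then have "?K - ?L * t / p < 0"
      using L p_gt_2 by (simp add: field_simps)
    moreover have "t powr (2 * ?b + 2) = t powr (2 * ?b + 1) * t"
      using t by (simp add: powr_add power2_eq_square)
    then have "energy p G (plateau t) (soliton_tail t \<sigma>) (\<lambda>e x. 0) (soliton_tail_deriv t \<sigma>)
        = t powr (2 * ?b + 1) * (?K - ?L * t / p)"
      unfolding energy_soliton_tail[OF len t] using p_gt_2 by (simp add: field_simps)
    ultimately show ?case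
      using t by (simp add: mult_pos_neg)
  qed
qed

lemma soliton_tail_attains_large_masses:
  assumes G: "finite_graph_in_G G" and "bedges G \<noteq> {}"
  obtains \<mu>\<^sub>0 where "0 < \<mu>\<^sub>0"
    and "\<And>\<mu>. \<mu>\<^sub>0 \<le> \<mu> \<Longrightarrow> \<exists>t>0. mass G (plateau t) (soliton_tail t \<sigma>) = \<mu> \<and>
           energy p G (plateau t) (soliton_tail t \<sigma>) (\<lambda>e x. 0) (soliton_tail_deriv t \<sigma>) < 0"
proof -
  define m where "m t = mass G (plateau t) (soliton_tail t \<sigma>)" for t
  obtain T where energy_neg: "\<And>t. T \<le> t \<Longrightarrow>
      energy p G (plateau t) (soliton_tail t \<sigma>) (\<lambda>e x. 0) (soliton_tail_deriv t \<sigma>) < 0"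
    using eventually_energy_soliton_tail_neg[OF assms] by (auto simp: eventually_at_top_linorder)
  define t\<^sub>0 where "t\<^sub>0 = max 1 T"
  have len: "\<forall>e\<in>bedges G. 0 < len G e"
    using G by (simp add: finite_graph_in_G_def)
  have "continuous_on {t\<^sub>0..} m"
    using continuous_on_mass_soliton_tail[OF len] unfolding m_def t\<^sub>0_def
    by (rule continuous_on_subset) auto
  moreover have "filterlim m at_top at_top"
    unfolding m_def by (rule filterlim_mass_soliton_tail[OF assms])
  ultimately have "\<exists>t\<ge>t\<^sub>0. m t = \<mu>" if "m t\<^sub>0 \<le> \<mu>" for \<mu>
    using that by (rule continuous_on_filterlim_at_top_attains)
  moreover have "0 < t" and "T \<le> t" if "t\<^sub>0 \<le> t" for t
    using that by (auto simp: t\<^sub>0_def)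
  ultimately show ?thesis
    using that[of "max 1 (m t\<^sub>0)"] energy_neg unfolding m_def by fastforce
qed

end

theorem theorem1p4:
  fixes G :: mgraph
  assumes "finite_graph_in_G G"
    and "noncompact G"
    and "bedges G \<noteq> {}"
    and "\<forall>v\<in>verts G. even (card {h\<in>hedges G. att G h = v})"
  shows "\<forall>p::real. p > 6 \<longrightarrow>
           (\<exists>\<mu>bar>0. \<forall>\<mu>\<ge>\<mu>bar. \<exists>lam ub uh dub duh.
              positive_kirchhoff_solution p lam G ub uh dub duh \<and>
              mass G ub uh = \<mu> \<and> energy p G ub uh dub duh < 0)"
proof (intro allI impI)
  fix p :: real
  assume "p > 6"
  then have p: "2 < p" by simp
  have "finite (hedges G)"
    using assms(1) by (simp add: finite_graph_in_G_def)
  obtain \<sigma> :: "nat \<Rightarrow> real" where sign: "\<forall>h\<in>hedges G. \<sigma> h = 1 \<or> \<sigma> h = -1"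
    and balanced: "\<forall>v\<in>verts G. (\<Sum>h\<in>{h\<in>hedges G. att G h = v}. \<sigma> h) = 0"
    using obtain_balanced_signs[OF \<open>finite (hedges G)\<close> assms(4)] by blast
  obtain \<mu>\<^sub>0 where "0 < \<mu>\<^sub>0" and large: "\<And>\<mu>. \<mu>\<^sub>0 \<le> \<mu> \<Longrightarrow> \<exists>t>0.
      mass G (plateau p t) (soliton_tail p t \<sigma>) = \<mu> \<and>
      energy p G (plateau p t) (soliton_tail p t \<sigma>) (\<lambda>e x. 0) (soliton_tail_deriv p t \<sigma>) < 0"
    using soliton_tail_attains_large_masses[OF p assms(1,3), where \<sigma> = \<sigma>] by blast
  show "\<exists>\<mu>bar>0. \<forall>\<mu>\<ge>\<mu>bar. \<exists>lam ub uh dub duh.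
      positive_kirchhoff_solution p lam G ub uh dub duh \<and> mass G ub uh = \<mu> \<and> energy p G ub uh dub duh < 0"
  proof (rule exI[of _ \<mu>\<^sub>0], intro conjI allI impI)
    fix \<mu> assume "\<mu>\<^sub>0 \<le> \<mu>"
    then obtain t where "0 < t" and "mass G (plateau p t) (soliton_tail p t \<sigma>) = \<mu>"
      and "energy p G (plateau p t) (soliton_tail p t \<sigma>) (\<lambda>e x. 0) (soliton_tail_deriv p t \<sigma>) < 0"
      using large by blast
    then show "\<exists>lam ub uh dub duh. positive_kirchhoff_solution p lam G ub uh dub duh \<and>
        mass G ub uh = \<mu> \<and> energy p G ub uh dub duh < 0"
      using positive_kirchhoff_solution_soliton_tail[OF p \<open>0 < t\<close> sign balanced] by (intro exI conjI)
  qed fact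
qed

end
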